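(* Let $r\in(0,1/36)$, $p\in(0,r)$, $h=8/15$, $a=3/15$, let $m,n\in\mathbb N$ and $D_{mn}(p,r)=\left(\frac{a\,r^{n+1}}{p^m},\,r\right)$. For $q\in D_{mn}(p,r)$ let $K_{pqr}$ be the attractor of $\mathcal S_{pqr}=\{S_1,\dots,S_6\}$ with $S_1(x)=px$, $S_2(x)=a+rx$, $S_3(x)=h-qx$, $S_4(x)=h-r+rx$, $S_5(x)=1-a-rx$, $S_6(x)=1-r+rx$. Let $\Delta_{mn}(p,r)$ be the set of $q\in D_{mn}(p,r)$ for which there exist $i\in\{2,\dots,6\}$ and $j\in\{1,\dots,5\}$ with $S_3S_1^mS_i(K_{pqr})\cap S_4S_6^nS_j(K_{pqr})\neq\emptyset$. Then $\Delta_{mn}(p,r)$ is a closed subset of $D_{mn}(p,r)$ and $\dim_H\Delta_{mn}(p,r)\le-\frac{2\log 6}{\log r}$.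
   Context: $S_1^m$ denotes $m$-fold composition; $\dim_H$ is Hausdorff dimension. *)

theory Defs
  imports "HOL-Analysis.Analysis"
begin

definition ifs_attractor :: "'i set \<Rightarrow> ('i \<Rightarrow> real \<Rightarrow> real) \<Rightarrow> real set" where
  "ifs_attractor I S = (THE K. compact K \<and> K \<noteq> {} \<and> K = (\<Union>i\<in>I. S i ` K))"

definition hcst :: real where "hcst = 8/15"
definition acst :: real where "acst = 3/15"

definition Spqr :: "real \<Rightarrow> real \<Rightarrow> real \<Rightarrow> nat \<Rightarrow> real \<Rightarrow> real" where
  "Spqr p q r i x =
     (if i = 1 then p * x
      else if i = 2 then acst + r * x
      else if i = 3 then hcst - q * x
      else if i = 4 then hcst - r + r * x
      else if i = 5 then 1 - acst - r * x
      else 1 - r + r * x)"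

definition Kpqr :: "real \<Rightarrow> real \<Rightarrow> real \<Rightarrow> real set" where
  "Kpqr p q r = ifs_attractor {1..6} (Spqr p q r)"

definition Dmn :: "nat \<Rightarrow> nat \<Rightarrow> real \<Rightarrow> real \<Rightarrow> real set" where
  "Dmn m n p r = {acst * r ^ (n + 1) / p ^ m <..< r}"

definition Deltamn :: "nat \<Rightarrow> nat \<Rightarrow> real \<Rightarrow> real \<Rightarrow> real set" where
  "Deltamn m n p r = {q \<in> Dmn m n p r. \<exists>i\<in>{2..6}. \<exists>j\<in>{1..5}.
      (Spqr p q r 3 \<circ> (Spqr p q r 1 ^^ m) \<circ> Spqr p q r i) ` Kpqr p q r \<inter>
      (Spqr p q r 4 \<circ> (Spqr p q r 6 ^^ n) \<circ> Spqr p q r j) ` Kpqr p q r \<noteq> {}}"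

definition hausdorff_pre :: "real \<Rightarrow> real \<Rightarrow> real set \<Rightarrow> ennreal" where
  "hausdorff_pre s \<delta> A =
     (INF C \<in> {C :: nat \<Rightarrow> real set. A \<subseteq> (\<Union>i. C i) \<and> (\<forall>i. bounded (C i) \<and> diameter (C i) \<le> \<delta>)}.
        (\<Sum>i. ennreal (diameter (C i) powr s)))"

definition hausdorff_measure :: "real \<Rightarrow> real set \<Rightarrow> ennreal" where
  "hausdorff_measure s A = (SUP \<delta>\<in>{0<..}. hausdorff_pre s \<delta> A)"

definition hausdorff_dim :: "real set \<Rightarrow> real" where
  "hausdorff_dim A = Inf {s. 0 \<le> s \<and> hausdorff_measure s A = 0}"

end

theory Submission
  imports Defs
begin

(*
  Every map of S_pqr moves by at most |q' - q| when q changes and contracts by r, so every point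
  of K_q' lies within |q' - q| / (1 - r) of K_q.  The defining condition of Delta says that 0 lies
  in the compact set of gaps q p^m S_i x - r^(n+1) (1 - S_j y), x, y in K_q, which therefore moves
  continuously with q; hence Delta is relatively closed in D.

  For the dimension, write x and y as images of K_q under words of length k.  The parameters sharing
  a pair of codes form a set of diameter O(r^k): the gap is linear in q with slope at least p^m / 5,
  while q > a r^(n+1) / p^m keeps the r^(n+1)-term comparable to r p^m.  These 25 * 36^k sets cover
  Delta, so its s-dimensional Hausdorff measure vanishes as soon as 36 r^s < 1.
*)

section \<open>Attractors of iterated function systems\<close>

(* With T' = T and e = 0 this gives uniqueness of invariant compact sets; with T' a perturbation
   of T it bounds how far the invariant set moves. *)
lemma infdist_attractor_le:
  fixes K L :: "'a::heine_borel set" and T T' :: "'i \<Rightarrow> 'a \<Rightarrow> 'a"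
  assumes K: "compact K" "K \<noteq> {}" and "bounded L"
    and K_inv: "\<And>i. i \<in> I \<Longrightarrow> T i ` K \<subseteq> K"
    and L_cov: "L \<subseteq> (\<Union>i\<in>I. T' i ` L)"
    and close: "\<And>i x y. i \<in> I \<Longrightarrow> x \<in> L \<Longrightarrow> y \<in> K \<Longrightarrow> dist (T' i x) (T i y) \<le> e + c * dist x y"
    and c: "0 \<le> c" "c < 1"
    and x: "x \<in> L"
  shows "infdist x K \<le> e / (1 - c)"
proof -
  define d where "d = (SUP x\<in>L. infdist x K)"
  have bdd: "bdd_above ((\<lambda>x. infdist x K) ` L)"
  proof -
    obtain a where a: "a \<in> K" using K by auto
    obtain B where "\<forall>x\<in>L. dist a x \<le> B" using \<open>bounded L\<close> bounded_any_center by blast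
    then show ?thesis
      using infdist_le[OF a] by (intro bdd_aboveI2[of _ _ B]) (metis dist_commute order_trans)
  qed
  have "infdist z K \<le> e + c * d" if "z \<in> L" for z
  proof -
    obtain i x0 where i: "i \<in> I" "x0 \<in> L" "z = T' i x0" using L_cov \<open>z \<in> L\<close> by blast
    obtain y0 where y0: "y0 \<in> K" "infdist x0 K = dist x0 y0"
      using infdist_attains_inf[OF compact_imp_closed[OF K(1)] K(2)] by blast
    have "infdist z K \<le> dist z (T i y0)" using K_inv i y0 infdist_le by blast
    also have "\<dots> \<le> e + c * dist x0 y0" using close i y0 by blast
    also have "\<dots> \<le> e + c * d"
      using y0 c cSup_upper[OF imageI[OF i(2)] bdd] by (simp add: d_def mult_left_mono)
    finally show ?thesis .
  qed
  then have "d \<le> e + c * d" unfolding d_def using x by (intro cSUP_least) auto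
  then have "d \<le> e / (1 - c)" using c by (simp add: pos_le_divide_eq algebra_simps)
  moreover have "infdist x K \<le> d" unfolding d_def using bdd x by (intro cSUP_upper)
  ultimately show ?thesis by simp
qed

lemma ifs_invariant_set_unique:
  fixes K L :: "'a::heine_borel set" and S :: "'i \<Rightarrow> 'a \<Rightarrow> 'a"
  assumes lip: "\<And>i x y. i \<in> I \<Longrightarrow> dist (S i x) (S i y) \<le> c * dist x y" and c: "0 \<le> c" "c < 1"
    and K: "compact K" "K \<noteq> {}" "K = (\<Union>i\<in>I. S i ` K)"
    and L: "compact L" "L \<noteq> {}" "L = (\<Union>i\<in>I. S i ` L)"
  shows "L = K"
proof -
  have "A \<subseteq> B" if A: "compact A" "A = (\<Union>i\<in>I. S i ` A)"
    and B: "compact B" "B \<noteq> {}" "B = (\<Union>i\<in>I. S i ` B)" for A B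
  proof
    fix x assume "x \<in> A"
    have "infdist x B \<le> 0 / (1 - c)"
    proof (rule infdist_attractor_le[OF B(1,2) compact_imp_bounded[OF A(1)],
          where I = I and T = S and T' = S])
      show "S i ` B \<subseteq> B" if "i \<in> I" for i using that B(3) by blast
    qed (use lip c \<open>x \<in> A\<close> A(2) in auto)
    then show "x \<in> B"
      using infdist_nonneg[of x B] in_closure_iff_infdist_zero[OF B(2)] compact_imp_closed[OF B(1)]
      by (simp add: closure_closed)
  qed
  then show ?thesis using K L by blast
qed

lemma ifs_attractor_eqI:
  fixes K :: "real set" and S :: "'i \<Rightarrow> real \<Rightarrow> real"
  assumes "\<And>i x y. i \<in> I \<Longrightarrow> dist (S i x) (S i y) \<le> c * dist x y" "0 \<le> c" "c < 1"
    and "compact K" "K \<noteq> {}" "K = (\<Union>i\<in>I. S i ` K)"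
  shows "ifs_attractor I S = K"
  unfolding ifs_attractor_def using ifs_invariant_set_unique[OF assms] assms(4-6)
  by (intro the_equality) blast+

lemma foldr_mem_invariant:
  assumes "\<And>i. i \<in> I \<Longrightarrow> S i ` X \<subseteq> X" "w \<in> lists I" "x \<in> X"
  shows "foldr S w x \<in> X"
  using assms(2) by (induction w) (use assms(1,3) in auto)

lemma ifs_invariant_set_exists:
  fixes S :: "'i \<Rightarrow> 'a::heine_borel \<Rightarrow> 'a"
  assumes X: "compact X" "\<And>i. i \<in> I \<Longrightarrow> S i ` X \<subseteq> X"
    and cont: "\<And>i. i \<in> I \<Longrightarrow> continuous_on UNIV (S i)"
    and "finite I" and fixed: "i0 \<in> I" "S i0 x0 = x0" "x0 \<in> X"
  shows "\<exists>K. compact K \<and> K \<noteq> {} \<and> K \<subseteq> X \<and> K = (\<Union>i\<in>I. S i ` K)"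
proof -
  define Orb where "Orb = (\<lambda>w. foldr S w x0) ` lists I"
  have "x0 \<in> Orb" unfolding Orb_def by (rule image_eqI[of _ _ "[]"]) auto
  have Orb_step: "S i ` Orb \<subseteq> Orb" if "i \<in> I" for i
  proof
    fix y assume "y \<in> S i ` Orb"
    then obtain w where "w \<in> lists I" "y = foldr S (i # w) x0" unfolding Orb_def by auto
    then show "y \<in> Orb" using that unfolding Orb_def by (intro image_eqI[of _ _ "i # w"]) auto
  qed
  have "Orb \<subseteq> X" unfolding Orb_def using foldr_mem_invariant[of I S X _ x0] X(2) fixed(3) by blast
  then have KX: "closure Orb \<subseteq> X" using X(1) by (simp add: closure_minimal compact_imp_closed)
  then have K: "compact (closure Orb)"
    by (simp add: compact_eq_bounded_closed bounded_subset[OF compact_imp_bounded[OF X(1)]])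
  have "x0 \<in> S i0 ` Orb" using fixed(2) \<open>x0 \<in> Orb\<close> by (metis imageI)
  have "Orb \<subseteq> (\<Union>i\<in>I. S i ` Orb)"
  proof
    fix y assume "y \<in> Orb"
    then obtain w where w: "w \<in> lists I" "y = foldr S w x0" unfolding Orb_def by blast
    show "y \<in> (\<Union>i\<in>I. S i ` Orb)"
    proof (cases w)
      case Nil
      then show ?thesis using w \<open>x0 \<in> S i0 ` Orb\<close> fixed(1) by auto
    next
      case (Cons i v)
      then have "v \<in> lists I" "i \<in> I" "y = S i (foldr S v x0)" using w by auto
      then show ?thesis unfolding Orb_def by blast
    qed
  qed
  also have "\<dots> \<subseteq> (\<Union>i\<in>I. S i ` closure Orb)" using closure_subset by blast
  finally have "closure Orb \<subseteq> (\<Union>i\<in>I. S i ` closure Orb)"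
    using K continuous_on_subset[OF cont subset_UNIV] \<open>finite I\<close>
    by (intro closure_minimal compact_imp_closed compact_UN compact_continuous_image) auto
  moreover have "S i ` closure Orb \<subseteq> closure Orb" if "i \<in> I" for i
    using image_closure_subset[OF continuous_on_subset[OF cont[OF that] subset_UNIV] closed_closure]
      Orb_step[OF that] closure_subset by blast
  moreover have "closure Orb \<noteq> {}" using \<open>x0 \<in> Orb\<close> closure_subset by blast
  ultimately show ?thesis using K KX by blast
qed

lemma invariant_set_foldr_decomp:
  assumes K: "K \<subseteq> (\<Union>i\<in>I. S i ` K)" and "x \<in> K"
  shows "\<exists>w. set w \<subseteq> I \<and> length w = k \<and> (\<exists>z\<in>K. x = foldr S w z)"
  using \<open>x \<in> K\<close>
proof (induction k arbitrary: x)
  case 0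
  then show ?case by force
next
  case (Suc k)
  obtain i x0 where "i \<in> I" "x0 \<in> K" "x = S i x0" using K Suc.prems by blast
  moreover obtain w z where "w \<in> lists I" "length w = k" "z \<in> K" "x0 = foldr S w z"
    using Suc.IH[OF \<open>x0 \<in> K\<close>] by blast
  ultimately show ?case by (intro exI[of _ "i # w"]) auto
qed

section \<open>Hausdorff-null sets\<close>

lemma hausdorff_pre_le_finite_cover:
  fixes Q :: "'c \<Rightarrow> real set"
  assumes "finite F" and cover: "A \<subseteq> (\<Union>c\<in>F. Q c)"
    and small: "\<And>c. c \<in> F \<Longrightarrow> bounded (Q c) \<and> diameter (Q c) \<le> \<delta>" and "0 \<le> \<delta>"
  shows "hausdorff_pre s \<delta> A \<le> ennreal (\<Sum>c\<in>F. diameter (Q c) powr s)"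
proof -
  define N where "N = card F"
  obtain f where f: "bij_betw f {..<N} F"
    using ex_bij_betw_nat_finite[OF \<open>finite F\<close>] by (auto simp: N_def atLeast0LessThan)
  define C where "C i = (if i < N then Q (f i) else {})" for i
  have "A \<subseteq> (\<Union>i. C i)"
    using cover f unfolding C_def bij_betw_def by (force split: if_splits)
  moreover have "bounded (C i) \<and> diameter (C i) \<le> \<delta>" for i
    using small f \<open>0 \<le> \<delta>\<close> unfolding C_def bij_betw_def by auto
  ultimately have "hausdorff_pre s \<delta> A \<le> (\<Sum>i. ennreal (diameter (C i) powr s))"
    unfolding hausdorff_pre_def by (intro INF_lower) blast
  also have "\<dots> = (\<Sum>i<N. ennreal (diameter (C i) powr s))"
    by (rule suminf_finite) (auto simp: C_def)
  also have "\<dots> = ennreal (\<Sum>i<N. diameter (Q (f i)) powr s)"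
    by (simp add: C_def sum_ennreal)
  also have "(\<Sum>i<N. diameter (Q (f i)) powr s) = (\<Sum>c\<in>F. diameter (Q c) powr s)"
    by (rule sum.reindex_bij_betw[OF f])
  finally show ?thesis .
qed

lemma hausdorff_measure_eq_0_if_covers:
  fixes F :: "nat \<Rightarrow> 'c set" and Q :: "nat \<Rightarrow> 'c \<Rightarrow> real set" and \<rho> :: "nat \<Rightarrow> real"
  assumes fin: "\<And>k. finite (F k)" and cover: "\<And>k. A \<subseteq> (\<Union>c\<in>F k. Q k c)"
    and small: "\<And>k c. c \<in> F k \<Longrightarrow> bounded (Q k c) \<and> diameter (Q k c) \<le> \<rho> k"
    and \<rho>: "\<rho> \<longlonglongrightarrow> 0" and sums: "(\<lambda>k. card (F k) * \<rho> k powr s) \<longlonglongrightarrow> 0" and "0 \<le> s"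
  shows "hausdorff_measure s A = 0"
proof -
  have "hausdorff_pre s \<delta> A \<le> ennreal \<epsilon>" if "0 < \<delta>" "0 < \<epsilon>" for \<delta> \<epsilon>
  proof -
    obtain k where k: "\<rho> k < \<delta>" "card (F k) * \<rho> k powr s < \<epsilon>"
      using eventually_conj[OF order_tendstoD(2)[OF \<rho> \<open>0 < \<delta>\<close>] order_tendstoD(2)[OF sums \<open>0 < \<epsilon>\<close>]]
      by (auto simp: eventually_sequentially)
    have "hausdorff_pre s \<delta> A \<le> ennreal (\<Sum>c\<in>F k. diameter (Q k c) powr s)"
      using small k(1) \<open>0 < \<delta>\<close> by (intro hausdorff_pre_le_finite_cover[OF fin cover]) force+
    also have "(\<Sum>c\<in>F k. diameter (Q k c) powr s) \<le> card (F k) * \<rho> k powr s"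
      using small \<open>0 \<le> s\<close> by (intro sum_bounded_above powr_mono2) (auto simp: diameter_ge_0)
    finally show ?thesis using k(2) by (meson ennreal_leI less_imp_le order_trans)
  qed
  then have "hausdorff_pre s \<delta> A = 0" if "0 < \<delta>" for \<delta>
    using that by (metis ennreal_le_epsilon add_0 le_zero_eq)
  then show ?thesis unfolding hausdorff_measure_def by simp
qed

lemma hausdorff_dim_le:
  assumes "0 \<le> s0" and null: "\<And>s. s0 < s \<Longrightarrow> hausdorff_measure s A = 0"
  shows "hausdorff_dim A \<le> s0"
proof (rule field_le_epsilon)
  fix e :: real assume "0 < e"
  then have "s0 + e \<in> {s. 0 \<le> s \<and> hausdorff_measure s A = 0}" using null \<open>0 \<le> s0\<close> by simp
  then show "hausdorff_dim A \<le> s0 + e"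
    unfolding hausdorff_dim_def by (rule cInf_lower) (auto intro: bdd_belowI[of _ 0])
qed

lemma mult_powr_less_one:
  fixes r b s :: real
  assumes "0 < r" "r < 1" "0 < b" and s: "- ln b / ln r < s"
  shows "b * r powr s < 1"
proof -
  have "ln r < 0" using assms by simp
  then have "s * ln r < (- ln b / ln r) * ln r" using s by (intro mult_strict_right_mono_neg)
  then have "s * ln r < - ln b" using \<open>ln r < 0\<close> by simp
  then have "exp (ln b + s * ln r) < 1" by simp
  then show ?thesis using assms by (simp add: powr_def exp_add)
qed

section \<open>The family of attractors K_pqr\<close>

lemma Spqr_1_funpow: "(Spqr p q r 1 ^^ m) x = p ^ m * x"
  by (induction m) (simp_all add: Spqr_def)

lemma Spqr_6_funpow: "(Spqr p q r 6 ^^ n) x = 1 - r ^ n * (1 - x)"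
proof (induction n)
  case (Suc n)
  have "(Spqr p q r 6 ^^ Suc n) x = Spqr p q r 6 (1 - r ^ n * (1 - x))" using Suc by simp
  also have "\<dots> = 1 - r ^ Suc n * (1 - x)" by (simp add: Spqr_def algebra_simps)
  finally show ?case .
qed simp

lemma continuous_on_Spqr: "continuous_on S (Spqr p q r i)"
proof -
  have affine: "Spqr p q r i = (\<lambda>x. Spqr p q r i 0 + (Spqr p q r i 1 - Spqr p q r i 0) * x)"
    by (rule ext) (simp add: Spqr_def algebra_simps)
  show ?thesis by (subst affine) (intro continuous_intros)
qed

lemma Deltamn_iff:
  "q \<in> Deltamn m n p r \<longleftrightarrow> q \<in> Dmn m n p r \<and>
     (\<exists>i\<in>{2..6}. \<exists>j\<in>{1..5}. \<exists>x\<in>Kpqr p q r. \<exists>y\<in>Kpqr p q r.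
        q * p ^ m * Spqr p q r i x = r ^ (n + 1) * (1 - Spqr p q r j y))"
proof -
  have "(Spqr p q r 3 \<circ> (Spqr p q r 1 ^^ m) \<circ> Spqr p q r i) x =
        (Spqr p q r 4 \<circ> (Spqr p q r 6 ^^ n) \<circ> Spqr p q r j) y \<longleftrightarrow>
      q * p ^ m * Spqr p q r i x = r ^ (n + 1) * (1 - Spqr p q r j y)" for i j x y
  proof -
    have S34: "Spqr p q r 3 u = hcst - q * u" "Spqr p q r 4 u = hcst - r + r * u" for u
      by (simp_all add: Spqr_def)
    show ?thesis unfolding comp_apply Spqr_1_funpow Spqr_6_funpow S34 by (auto simp: algebra_simps)
  qed
  then show ?thesis unfolding Deltamn_def by blast
qed

locale Spqr_parameters =
  fixes p r :: real
  assumes r_pos: "0 < r" and r_small: "r < 1/36" and p_pos: "0 < p" and p_less_r: "p < r"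
begin

lemma Spqr_mem_unit:
  assumes "0 \<le> q" "q \<le> r" "x \<in> {0..1}"
  shows "Spqr p q r i x \<in> {0..1}" and "i \<noteq> 1 \<Longrightarrow> acst \<le> Spqr p q r i x"
proof -
  have "p * x \<le> p" "r * x \<le> r" "q * x \<le> q" "0 \<le> p * x" "0 \<le> r * x" "0 \<le> q * x"
    using assms p_pos r_pos by (simp_all add: mult_left_le)
  note bounds = this assms(2) p_less_r r_small
  show "Spqr p q r i x \<in> {0..1}" "i \<noteq> 1 \<Longrightarrow> acst \<le> Spqr p q r i x"
    unfolding Spqr_def acst_def hcst_def by (auto split: if_splits) (insert bounds, linarith)+
qed

lemma Spqr_lipschitz:
  assumes "\<bar>q\<bar> \<le> r"
  shows "\<bar>Spqr p q r i x - Spqr p q r i y\<bar> \<le> r * \<bar>x - y\<bar>"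
proof -
  define c where "c = (if i = 1 then p else if i = 3 then - q else if i = 5 then - r else r)"
  have "Spqr p q r i x - Spqr p q r i y = c * (x - y)"
    unfolding Spqr_def c_def by (simp add: algebra_simps)
  moreover have "\<bar>c\<bar> \<le> r" unfolding c_def using assms p_pos p_less_r r_pos by auto
  ultimately show ?thesis by (simp add: abs_mult mult_right_mono)
qed

lemma Spqr_perturb:
  assumes "\<bar>q\<bar> \<le> r" and "x' \<in> {0..1}"
  shows "\<bar>Spqr p q' r i x' - Spqr p q r i x\<bar> \<le> \<bar>q' - q\<bar> + r * \<bar>x' - x\<bar>"
proof -
  have "Spqr p q' r i x' - Spqr p q r i x' = (if i = 3 then (q - q') * x' else 0)"
    by (simp add: Spqr_def algebra_simps)
  then have "\<bar>Spqr p q' r i x' - Spqr p q r i x'\<bar> \<le> \<bar>q' - q\<bar>"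
    using assms(2) mult_left_le[of x' "\<bar>q - q'\<bar>"] by (simp add: abs_mult abs_minus_commute)
  then show ?thesis using Spqr_lipschitz[OF assms(1), of i x' x] by linarith
qed

lemma foldr_Spqr_mem_unit:
  assumes "0 \<le> q" "q \<le> r" "x \<in> {0..1}"
  shows "foldr (Spqr p q r) w x \<in> {0..1}"
  by (induction w) (use Spqr_mem_unit(1)[OF assms(1,2)] assms(3) in auto)

lemma foldr_Spqr_perturb:
  assumes "0 \<le> q" "q \<le> r" "0 \<le> q'" "q' \<le> r" "x' \<in> {0..1}"
  shows "\<bar>foldr (Spqr p q' r) w x' - foldr (Spqr p q r) w x\<bar>
    \<le> \<bar>q' - q\<bar> / (1 - r) + r ^ length w * \<bar>x' - x\<bar>"
proof (induction w)
  case Nil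
  then show ?case using r_small by simp
next
  case (Cons i w)
  have "\<bar>foldr (Spqr p q' r) (i # w) x' - foldr (Spqr p q r) (i # w) x\<bar>
      \<le> \<bar>q' - q\<bar> + r * \<bar>foldr (Spqr p q' r) w x' - foldr (Spqr p q r) w x\<bar>"
    using Spqr_perturb foldr_Spqr_mem_unit assms by simp
  also have "\<dots> \<le> \<bar>q' - q\<bar> + r * (\<bar>q' - q\<bar> / (1 - r) + r ^ length w * \<bar>x' - x\<bar>)"
    using Cons.IH r_pos by (intro add_left_mono mult_left_mono) auto
  also have "\<dots> = \<bar>q' - q\<bar> / (1 - r) + r ^ length (i # w) * \<bar>x' - x\<bar>"
    using r_small by (simp add: field_simps)
  finally show ?case .
qed

lemma Kpqr_props:
  assumes "0 \<le> q" "q \<le> r"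
  shows "compact (Kpqr p q r)" "Kpqr p q r \<noteq> {}" "Kpqr p q r \<subseteq> {0..1}"
    and "Kpqr p q r = (\<Union>i\<in>{1..6}. Spqr p q r i ` Kpqr p q r)"
proof -
  have lip: "dist (Spqr p q r i x) (Spqr p q r i y) \<le> r * dist x y" for i x y
    using Spqr_lipschitz assms by (simp add: dist_real_def)
  have "Spqr p q r i ` {0..1} \<subseteq> {0..1}" for i
    using Spqr_mem_unit(1)[OF assms] by blast
  then obtain K where K: "compact K" "K \<noteq> {}" "K \<subseteq> {0..1}"
    "K = (\<Union>i\<in>{1..6}. Spqr p q r i ` K)"
    using ifs_invariant_set_exists[of "{0..1}" "{1..6}" "Spqr p q r" 1 0] continuous_on_Spqr
    by (auto simp: Spqr_def)
  moreover have "Kpqr p q r = K"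
    unfolding Kpqr_def using lip r_pos r_small K by (intro ifs_attractor_eqI[where c = r]) auto
  ultimately show "compact (Kpqr p q r)" "Kpqr p q r \<noteq> {}" "Kpqr p q r \<subseteq> {0..1}"
    "Kpqr p q r = (\<Union>i\<in>{1..6}. Spqr p q r i ` Kpqr p q r)" by simp_all
qed

lemma Kpqr_near:
  assumes q: "0 \<le> q" "q \<le> r" and q': "0 \<le> q'" "q' \<le> r" and "x' \<in> Kpqr p q' r"
  obtains x where "x \<in> Kpqr p q r" "\<bar>x' - x\<bar> \<le> \<bar>q' - q\<bar> / (1 - r)"
proof -
  note K = Kpqr_props[OF q] and K' = Kpqr_props[OF q']
  have "infdist x' (Kpqr p q r) \<le> \<bar>q' - q\<bar> / (1 - r)"
  proof (rule infdist_attractor_le[OF K(1,2) compact_imp_bounded[OF K'(1)]])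
    show "Spqr p q r i ` Kpqr p q r \<subseteq> Kpqr p q r" if "i \<in> {1..6}" for i
      using that K(4) by blast
    show "dist (Spqr p q' r i x) (Spqr p q r i y) \<le> \<bar>q' - q\<bar> + r * dist x y"
      if "x \<in> Kpqr p q' r" for i x y
      using Spqr_perturb that K'(3) q by (auto simp: dist_real_def)
  qed (use K'(4) \<open>x' \<in> Kpqr p q' r\<close> r_pos r_small in auto)
  moreover obtain x where "x \<in> Kpqr p q r" "infdist x' (Kpqr p q r) = dist x' x"
    using infdist_attains_inf[OF compact_imp_closed[OF K(1)] K(2)] by blast
  ultimately show ?thesis using that by (auto simp: dist_real_def)
qed

lemma Dmn_subset: "Dmn m n p r \<subseteq> {0<..<r}"
proof -
  have "0 \<le> acst * r ^ (n + 1) / p ^ m" using p_pos r_pos by (simp add: acst_def)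
  then show ?thesis unfolding Dmn_def by auto
qed

end

section \<open>Closedness of Delta\<close>

definition coincidence_gaps :: "nat \<Rightarrow> nat \<Rightarrow> real \<Rightarrow> real \<Rightarrow> real \<Rightarrow> real set" where
  "coincidence_gaps m n p r q = (\<Union>i\<in>{2..6}. \<Union>j\<in>{1..5}.
     (\<lambda>z. q * p ^ m * Spqr p q r i (fst z) - r ^ (n + 1) * (1 - Spqr p q r j (snd z))) `
       (Kpqr p q r \<times> Kpqr p q r))"

lemma Deltamn_iff_zero_in_gaps:
  "q \<in> Deltamn m n p r \<longleftrightarrow> q \<in> Dmn m n p r \<and> 0 \<in> coincidence_gaps m n p r q"
  unfolding Deltamn_iff coincidence_gaps_def by force

lemma coincidence_gap_diff_le:
  fixes q q' a a' b b' P R :: real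
  assumes "0 \<le> P" "P \<le> 1" "0 \<le> R" "R \<le> 1" "0 \<le> a'" "a' \<le> 1" "0 \<le> q" "q \<le> 1"
  shows "\<bar>(q' * P * a' - R * (1 - b')) - (q * P * a - R * (1 - b))\<bar>
    \<le> \<bar>q' - q\<bar> + \<bar>a' - a\<bar> + \<bar>b' - b\<bar>"
proof -
  have "\<bar>q' * a' - q * a\<bar> \<le> \<bar>q' - q\<bar> + \<bar>a' - a\<bar>"
  proof -
    have "q' * a' - q * a = (q' - q) * a' + q * (a' - a)" by (simp add: algebra_simps)
    moreover have "\<bar>(q' - q) * a'\<bar> \<le> \<bar>q' - q\<bar>" "\<bar>q * (a' - a)\<bar> \<le> \<bar>a' - a\<bar>"
      using assms by (simp_all add: abs_mult mult_left_le mult_left_le_one_le)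
    ultimately show ?thesis by linarith
  qed
  moreover have "(q' * P * a' - R * (1 - b')) - (q * P * a - R * (1 - b))
      = P * (q' * a' - q * a) + R * (b' - b)"
    by (simp add: algebra_simps)
  moreover have "\<bar>P * (q' * a' - q * a)\<bar> \<le> \<bar>q' * a' - q * a\<bar>" "\<bar>R * (b' - b)\<bar> \<le> \<bar>b' - b\<bar>"
    using assms by (simp_all add: abs_mult mult_left_le_one_le)
  ultimately show ?thesis by linarith
qed

context Spqr_parameters
begin

lemma compact_coincidence_gaps:
  assumes "0 \<le> q" "q \<le> r"
  shows "compact (coincidence_gaps m n p r q)" "coincidence_gaps m n p r q \<noteq> {}"
proof -
  note K = Kpqr_props[OF assms]
  have "continuous_on S (\<lambda>z. Spqr p q r i (fst z))"
    and "continuous_on S (\<lambda>z. Spqr p q r i (snd z))" for i S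
    by (rule continuous_on_compose2[OF continuous_on_Spqr continuous_on_fst[OF continuous_on_id] subset_UNIV],
        rule continuous_on_compose2[OF continuous_on_Spqr continuous_on_snd[OF continuous_on_id] subset_UNIV])
  then show "compact (coincidence_gaps m n p r q)"
    unfolding coincidence_gaps_def using K(1)
    by (intro compact_UN finite_atLeastAtMost compact_continuous_image compact_Times continuous_intros)
  show "coincidence_gaps m n p r q \<noteq> {}" unfolding coincidence_gaps_def using K(2) by auto
qed

lemma Spqr_near_attractor:
  assumes q: "0 \<le> q" "q \<le> r" and q': "0 \<le> q'" "q' \<le> r" and x': "x' \<in> Kpqr p q' r"
  obtains x where "x \<in> Kpqr p q r" "\<bar>Spqr p q' r i x' - Spqr p q r i x\<bar> \<le> \<bar>q' - q\<bar> / (1 - r)"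
proof -
  define d where "d = \<bar>q' - q\<bar> / (1 - r)"
  obtain x where x: "x \<in> Kpqr p q r" "\<bar>x' - x\<bar> \<le> d"
    using Kpqr_near[OF q q' x'] unfolding d_def by blast
  have "x' \<in> {0..1}" using x' Kpqr_props(3)[OF q'] by blast
  moreover have "r * \<bar>x' - x\<bar> \<le> r * d" using x(2) r_pos by simp
  ultimately have "\<bar>Spqr p q' r i x' - Spqr p q r i x\<bar> \<le> \<bar>q' - q\<bar> + r * d"
    using Spqr_perturb[of q x' q' i x] q by simp
  also have "\<dots> = d" unfolding d_def using r_small by (simp add: field_simps)
  finally show ?thesis using that x(1) unfolding d_def by blast
qed

lemma coincidence_gaps_near:
  assumes q: "0 \<le> q" "q \<le> r" and q': "0 \<le> q'" "q' \<le> r"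
    and "g' \<in> coincidence_gaps m n p r q'"
  obtains g where "g \<in> coincidence_gaps m n p r q" "\<bar>g' - g\<bar> \<le> 3 * \<bar>q' - q\<bar> / (1 - r)"
proof -
  define d where "d = \<bar>q' - q\<bar> / (1 - r)"
  obtain i j x' y' where ij: "i \<in> {2..6}" "j \<in> {1..5}"
    and xy': "x' \<in> Kpqr p q' r" "y' \<in> Kpqr p q' r"
    and g': "g' = q' * p ^ m * Spqr p q' r i x' - r ^ (n + 1) * (1 - Spqr p q' r j y')"
    using \<open>g' \<in> coincidence_gaps m n p r q'\<close> unfolding coincidence_gaps_def by auto
  obtain x where x: "x \<in> Kpqr p q r" "\<bar>Spqr p q' r i x' - Spqr p q r i x\<bar> \<le> d"
    using Spqr_near_attractor[OF q q' xy'(1)] unfolding d_def by blast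
  obtain y where y: "y \<in> Kpqr p q r" "\<bar>Spqr p q' r j y' - Spqr p q r j y\<bar> \<le> d"
    using Spqr_near_attractor[OF q q' xy'(2)] unfolding d_def by blast
  define g where "g = q * p ^ m * Spqr p q r i x - r ^ (n + 1) * (1 - Spqr p q r j y)"
  have "g \<in> coincidence_gaps m n p r q" unfolding g_def coincidence_gaps_def using ij x y by force
  moreover have "\<bar>g' - g\<bar> \<le> 3 * d"
  proof -
    have "p ^ m \<le> 1" "r ^ (n + 1) \<le> 1"
      using p_pos p_less_r r_pos r_small power_le_one[of p m] power_le_one[of r "n + 1"] by simp_all
    moreover have "Spqr p q' r i x' \<in> {0..1}"
      using Spqr_mem_unit(1)[OF q'] xy'(1) Kpqr_props(3)[OF q'] by blast
    ultimately have "\<bar>g' - g\<bar> \<le> \<bar>q' - q\<bar> + \<bar>Spqr p q' r i x' - Spqr p q r i x\<bar>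
        + \<bar>Spqr p q' r j y' - Spqr p q r j y\<bar>"
      unfolding g' g_def using p_pos r_pos q r_small
      by (intro coincidence_gap_diff_le[where P = "p ^ m" and R = "r ^ (n + 1)"]) auto
    then have "\<bar>g' - g\<bar> \<le> \<bar>q' - q\<bar> + d + d" using x(2) y(2) by linarith
    moreover have "\<bar>q' - q\<bar> \<le> d"
      unfolding d_def using r_pos r_small mult_left_le[of "1 - r" "\<bar>q' - q\<bar>"]
      by (simp add: le_divide_eq)
    ultimately show ?thesis by linarith
  qed
  ultimately show ?thesis using that unfolding d_def by auto
qed

lemma Deltamn_closedin: "closedin (top_of_set (Dmn m n p r)) (Deltamn m n p r)"
proof -
  let ?D = "Dmn m n p r" and ?\<Delta> = "Deltamn m n p r" and ?G = "coincidence_gaps m n p r"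
  have "\<exists>e>0. \<forall>q'\<in>?D. dist q' q < e \<longrightarrow> q' \<notin> ?\<Delta>" if q: "q \<in> ?D - ?\<Delta>" for q
  proof -
    have q0r: "0 \<le> q" "q \<le> r" using q Dmn_subset by force+
    note G = compact_coincidence_gaps[OF q0r, of m n]
    define \<delta> where "\<delta> = infdist 0 (?G q)"
    have "0 < \<delta>" unfolding \<delta>_def
      using q Deltamn_iff_zero_in_gaps
      by (intro infdist_pos_not_in_closed compact_imp_closed G) auto
    moreover have "q' \<notin> ?\<Delta>" if q': "q' \<in> ?D" "dist q' q < \<delta> * (1 - r) / 3" for q'
    proof
      assume "q' \<in> ?\<Delta>"
      then have "0 \<in> ?G q'" using Deltamn_iff_zero_in_gaps by blast
      moreover have "0 \<le> q'" "q' \<le> r" using q' Dmn_subset by force+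
      ultimately obtain g where g: "g \<in> ?G q" "\<bar>0 - g\<bar> \<le> 3 * \<bar>q' - q\<bar> / (1 - r)"
        using coincidence_gaps_near[OF q0r] by blast
      have "3 * \<bar>q' - q\<bar> / (1 - r) < \<delta>"
        using q'(2) r_small by (simp add: dist_real_def field_simps)
      moreover have "\<delta> \<le> \<bar>0 - g\<bar>"
        unfolding \<delta>_def using infdist_le[OF g(1), of 0] by (simp add: dist_real_def)
      ultimately show False using g(2) by linarith
    qed
    ultimately show ?thesis using r_small by (intro exI[of _ "\<delta> * (1 - r) / 3"]) auto
  qed
  then have "openin (top_of_set ?D) (?D - ?\<Delta>)"
    unfolding openin_euclidean_subtopology_iff by blast
  moreover have "?\<Delta> \<subseteq> ?D" using Deltamn_iff by blast
  ultimately show ?thesis by (simp add: closedin_def)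
qed

end

section \<open>Dimension of Delta\<close>

(* foldr (Spqr p q r) u is the composition S_u1 o ... o S_uk, so x and y range over the
   cylinders S_u(K_pqr) and S_v(K_pqr). *)
definition coincidence_params :: "nat \<Rightarrow> nat \<Rightarrow> real \<Rightarrow> real \<Rightarrow> nat list \<Rightarrow> nat list \<Rightarrow> real set" where
  "coincidence_params m n p r u v = {q \<in> Dmn m n p r. \<exists>x\<in>Kpqr p q r. \<exists>y\<in>Kpqr p q r.
     q * p ^ m * foldr (Spqr p q r) u x = r ^ (n + 1) * (1 - foldr (Spqr p q r) v y)}"

definition coincidence_codes :: "nat \<Rightarrow> ((nat \<times> nat list) \<times> (nat \<times> nat list)) set" where
  "coincidence_codes k = ({2..6} \<times> {w. set w \<subseteq> {1..6} \<and> length w = k}) \<times>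
     ({1..5} \<times> {w. set w \<subseteq> {1..6} \<and> length w = k})"

lemma coincidence_codes_finite_card:
  "finite (coincidence_codes k)" "card (coincidence_codes k) = 25 * 36 ^ k"
proof -
  have "finite {w. set w \<subseteq> {1..6::nat} \<and> length w = k}"
    "card {w. set w \<subseteq> {1..6::nat} \<and> length w = k} = 6 ^ k"
    by (simp_all add: finite_lists_length_eq card_lists_length_eq)
  then show "finite (coincidence_codes k)" "card (coincidence_codes k) = 25 * 36 ^ k"
    unfolding coincidence_codes_def
    by (simp_all add: card_cartesian_product power_mult_distrib[symmetric])
qed

lemma coincidence_equation_diff_le:
  fixes q1 q2 a1 a2 b1 b2 P R r E :: real
  assumes eq1: "q1 * P * a1 = R * (1 - b1)" and eq2: "q2 * P * a2 = R * (1 - b2)"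
    and "0 < P" "0 \<le> R" "R \<le> 5 * r * P" "1/5 \<le> a1" "0 \<le> q2" "q2 \<le> r"
    and a: "\<bar>a1 - a2\<bar> \<le> E" and b: "\<bar>b1 - b2\<bar> \<le> E"
  shows "\<bar>q1 - q2\<bar> \<le> 30 * r * E"
proof -
  have "(q1 - q2) * P * a1 = R * (b2 - b1) + q2 * P * (a2 - a1)"
    using eq1 eq2 by (simp add: algebra_simps)
  moreover have "\<bar>q1 - q2\<bar> * P * a1 = \<bar>(q1 - q2) * P * a1\<bar>"
    using assms(3,6) by (simp add: abs_mult)
  ultimately have "\<bar>q1 - q2\<bar> * P * a1 = \<bar>R * (b2 - b1) + q2 * P * (a2 - a1)\<bar>" by simp
  also have "\<dots> \<le> \<bar>R * (b2 - b1)\<bar> + \<bar>q2 * P * (a2 - a1)\<bar>" by (rule abs_triangle_ineq)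
  also have "\<dots> = R * \<bar>b1 - b2\<bar> + q2 * P * \<bar>a1 - a2\<bar>"
    using assms(3,4,7) by (simp add: abs_mult abs_minus_commute)
  also have "\<dots> \<le> 5 * r * P * E + r * P * E"
    using assms(3-8) a b by (intro add_mono mult_mono) auto
  finally have "\<bar>q1 - q2\<bar> * P * a1 \<le> 6 * r * P * E" by (simp add: algebra_simps)
  moreover have "\<bar>q1 - q2\<bar> * P * (1/5) \<le> \<bar>q1 - q2\<bar> * P * a1"
    using assms(3,6) by (intro mult_left_mono) auto
  ultimately have "P * (\<bar>q1 - q2\<bar> / 5) \<le> P * (6 * r * E)" by (simp add: algebra_simps)
  then show ?thesis using \<open>0 < P\<close> by simp
qed

context Spqr_parameters
begin

lemma Deltamn_subset_coincidence_params:
  "Deltamn m n p r \<subseteq>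
     (\<Union>((i, w), (j, v))\<in>coincidence_codes k. coincidence_params m n p r (i # w) (j # v))"
proof
  fix q assume "q \<in> Deltamn m n p r"
  then obtain i j x y where q: "q \<in> Dmn m n p r" and ij: "i \<in> {2..6}" "j \<in> {1..5}"
    and xy: "x \<in> Kpqr p q r" "y \<in> Kpqr p q r"
    and eq: "q * p ^ m * Spqr p q r i x = r ^ (n + 1) * (1 - Spqr p q r j y)"
    using Deltamn_iff by blast
  have "0 \<le> q" "q \<le> r" using q Dmn_subset by force+
  note K_cover = equalityD1[OF Kpqr_props(4)[OF this]]
  obtain w z1 where w: "set w \<subseteq> {1..6}" "length w = k"
    and z1: "z1 \<in> Kpqr p q r" "x = foldr (Spqr p q r) w z1"
    using invariant_set_foldr_decomp[OF K_cover xy(1)] by blast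
  obtain v z2 where v: "set v \<subseteq> {1..6}" "length v = k"
    and z2: "z2 \<in> Kpqr p q r" "y = foldr (Spqr p q r) v z2"
    using invariant_set_foldr_decomp[OF K_cover xy(2)] by blast
  have "q \<in> coincidence_params m n p r (i # w) (j # v)"
    unfolding coincidence_params_def using q z1 z2 eq by auto
  moreover have "((i, w), (j, v)) \<in> coincidence_codes k"
    unfolding coincidence_codes_def using ij w v by auto
  ultimately show "q \<in> (\<Union>((i, w), (j, v))\<in>coincidence_codes k.
      coincidence_params m n p r (i # w) (j # v))" by force
qed

(* This is where the lower end of D_mn enters: it makes r^(n+1) comparable to r p^m. *)
lemma Dmn_lower_bound:
  assumes "q \<in> Dmn m n p r"
  shows "r ^ (n + 1) \<le> 5 * r * p ^ m"
proof -
  have "acst * r ^ (n + 1) / p ^ m < q" "q < r" using assms unfolding Dmn_def by simp_all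
  then have "acst * r ^ (n + 1) < q * p ^ m" using p_pos by (simp add: divide_less_eq)
  also have "\<dots> \<le> r * p ^ m" using \<open>q < r\<close> p_pos by (simp add: mult_right_mono)
  finally show ?thesis unfolding acst_def by simp
qed

lemma le_of_self_bound:
  assumes "0 \<le> d" "0 \<le> \<rho>" "d \<le> 30 * r * (d / (1 - r) + \<rho>)"
  shows "d \<le> 6 * \<rho>"
proof -
  have "d * (1 - r) \<le> 30 * r * d + 30 * r * (1 - r) * \<rho>"
    using assms(3) r_small by (simp add: field_simps)
  moreover have "d * (5 / 36) \<le> d * (1 - 31 * r)"
    using assms(1) r_small by (intro mult_left_mono) auto
  moreover have "30 * r * (1 - r) * \<rho> \<le> 30 * r * \<rho>"
    using assms(2) r_pos by (intro mult_right_mono) auto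
  moreover have "30 * r * \<rho> \<le> 30 / 36 * \<rho>" using assms(2) r_small by (intro mult_right_mono) auto
  ultimately show ?thesis by (simp add: algebra_simps)
qed

lemma coincidence_params_diff_le:
  assumes "i \<noteq> 1" "length w = k" "length v = Suc k"
    and q1: "q1 \<in> coincidence_params m n p r (i # w) v"
    and q2: "q2 \<in> coincidence_params m n p r (i # w) v"
  shows "\<bar>q1 - q2\<bar> \<le> 6 * r ^ Suc k"
proof -
  have "0 \<le> q1" "q1 \<le> r" "0 \<le> q2" "q2 \<le> r"
    using q1 q2 Dmn_subset unfolding coincidence_params_def by force+
  note range = this
  obtain x1 y1 where xy1: "x1 \<in> Kpqr p q1 r" "y1 \<in> Kpqr p q1 r"
    and eq1: "q1 * p ^ m * foldr (Spqr p q1 r) (i # w) x1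
      = r ^ (n + 1) * (1 - foldr (Spqr p q1 r) v y1)"
    using q1 unfolding coincidence_params_def by blast
  obtain x2 y2 where xy2: "x2 \<in> Kpqr p q2 r" "y2 \<in> Kpqr p q2 r"
    and eq2: "q2 * p ^ m * foldr (Spqr p q2 r) (i # w) x2
      = r ^ (n + 1) * (1 - foldr (Spqr p q2 r) v y2)"
    using q2 unfolding coincidence_params_def by blast
  have unit: "x1 \<in> {0..1}" "y1 \<in> {0..1}" "x2 \<in> {0..1}" "y2 \<in> {0..1}"
    using xy1 xy2 Kpqr_props(3) range by blast+
  define d where "d = \<bar>q1 - q2\<bar>"
  define E where "E = d / (1 - r) + r ^ Suc k"
  have close: "\<bar>foldr (Spqr p q1 r) u z1 - foldr (Spqr p q2 r) u z2\<bar> \<le> E"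
    if "length u = Suc k" "z1 \<in> {0..1}" "z2 \<in> {0..1}" for u z1 z2
  proof -
    have "r ^ Suc k * \<bar>z1 - z2\<bar> \<le> r ^ Suc k" using that r_pos by (intro mult_left_le) auto
    then show ?thesis
      using foldr_Spqr_perturb[OF range(3,4,1,2) that(2), of u z2] that(1)
      unfolding E_def d_def by simp
  qed
  have a1: "acst \<le> foldr (Spqr p q1 r) (i # w) x1"
    using Spqr_mem_unit(2)[OF range(1,2) foldr_Spqr_mem_unit[OF range(1,2) unit(1)] \<open>i \<noteq> 1\<close>] by simp
  have R: "r ^ (n + 1) \<le> 5 * r * p ^ m"
    using Dmn_lower_bound q1 unfolding coincidence_params_def by blast
  have "d \<le> 30 * r * E"
    unfolding d_def
  proof (rule coincidence_equation_diff_le[OF eq1 eq2 _ _ R])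
    show "\<bar>foldr (Spqr p q1 r) (i # w) x1 - foldr (Spqr p q2 r) (i # w) x2\<bar> \<le> E"
      using close[OF _ unit(1,3), of "i # w"] assms(2) by simp
    show "\<bar>foldr (Spqr p q1 r) v y1 - foldr (Spqr p q2 r) v y2\<bar> \<le> E"
      using close[OF assms(3) unit(2,4)] .
  qed (use a1 p_pos r_pos range in \<open>auto simp: acst_def\<close>)
  then show ?thesis using le_of_self_bound[of d "r ^ Suc k"] r_pos unfolding E_def d_def by simp
qed

lemma coincidence_params_bounded_diameter:
  assumes "i \<noteq> 1" "length w = k" "length v = k"
  shows "bounded (coincidence_params m n p r (i # w) (j # v))"
    and "diameter (coincidence_params m n p r (i # w) (j # v)) \<le> 6 * r ^ Suc k"
proof -
  have "coincidence_params m n p r (i # w) (j # v) \<subseteq> {0..r}"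
    using Dmn_subset[of m n] unfolding coincidence_params_def by auto
  then show "bounded (coincidence_params m n p r (i # w) (j # v))"
    by (meson bounded_closed_interval bounded_subset)
  show "diameter (coincidence_params m n p r (i # w) (j # v)) \<le> 6 * r ^ Suc k"
    using coincidence_params_diff_le[of i w k "j # v"] assms r_pos by (intro diameter_le) auto
qed

lemma Deltamn_hausdorff_null:
  assumes s: "- 2 * ln 6 / ln r < s"
  shows "hausdorff_measure s (Deltamn m n p r) = 0"
proof -
  define Q where
    "Q k = (\<lambda>((i, w), (j, v)). coincidence_params m n p r (i # w) (j # v))" for k :: nat
  have "36 * r powr s < 1"
  proof (rule mult_powr_less_one)
    have "ln (36 :: real) = 2 * ln 6" using ln_realpow[of 6 2] by simp
    then show "- ln 36 / ln r < s" using s by simp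
  qed (use r_pos r_small in auto)
  have "0 < - 2 * ln 6 / ln r" using r_pos r_small by (intro divide_neg_neg) auto
  then have "0 < s" using s by linarith
  show ?thesis
  proof (rule hausdorff_measure_eq_0_if_covers
      [where F = coincidence_codes and Q = Q and \<rho> = "\<lambda>k. 6 * r ^ Suc k"])
    show "Deltamn m n p r \<subseteq> (\<Union>c\<in>coincidence_codes k. Q k c)" for k
      using Deltamn_subset_coincidence_params unfolding Q_def by blast
    show "bounded (Q k c) \<and> diameter (Q k c) \<le> 6 * r ^ Suc k" if "c \<in> coincidence_codes k" for k c
      using that coincidence_params_bounded_diameter
      unfolding Q_def coincidence_codes_def by (auto split: prod.splits)
    have "(\<lambda>k. r ^ k) \<longlonglongrightarrow> 0" using r_pos r_small by (intro LIMSEQ_power_zero) simp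
    from tendsto_mult_right_zero[OF this, of "6 * r"]
    show "(\<lambda>k. 6 * r ^ Suc k) \<longlonglongrightarrow> 0" by (simp add: mult.assoc)
    have "card (coincidence_codes k) * (6 * r ^ Suc k) powr s
        = 25 * (6 * r) powr s * (36 * r powr s) ^ k" for k
    proof -
      have "(r ^ k) powr s = (r powr real k) powr s" using r_pos by (simp add: powr_realpow)
      also have "\<dots> = (r powr s) ^ k" using r_pos by (simp add: powr_powr powr_power mult.commute)
      finally have "(6 * r ^ Suc k) powr s = (6 * r) powr s * (r powr s) ^ k"
        by (simp add: powr_mult mult.assoc)
      then show ?thesis by (simp add: coincidence_codes_finite_card power_mult_distrib)
    qed
    moreover have "(\<lambda>k. 25 * (6 * r) powr s * (36 * r powr s) ^ k) \<longlonglongrightarrow> 0"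
      using \<open>36 * r powr s < 1\<close> by (intro tendsto_mult_right_zero LIMSEQ_power_zero) simp
    ultimately show "(\<lambda>k. card (coincidence_codes k) * (6 * r ^ Suc k) powr s) \<longlonglongrightarrow> 0" by simp
  qed (use coincidence_codes_finite_card \<open>0 < s\<close> in auto)
qed

end

theorem lemma4:
  fixes p r :: real and m n :: nat
  assumes "0 < r" and "r < 1/36" and "0 < p" and "p < r"
  shows "closedin (top_of_set (Dmn m n p r)) (Deltamn m n p r) \<and>
         hausdorff_dim (Deltamn m n p r) \<le> - 2 * ln 6 / ln r"
proof -
  interpret Spqr_parameters p r using assms by unfold_locales
  have "0 \<le> - 2 * ln 6 / ln r" using assms(1,2) by (simp add: divide_nonneg_neg)
  then show ?thesis using Deltamn_closedin hausdorff_dim_le[OF _ Deltamn_hausdorff_null] by blast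
qed

end
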